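(* Let $k,d,n\in\mathbb N$, $Q,K,V\in\mathbb R^{k\times d}$, $A:=K^\top Q/\sqrt k$ and $R>0$. Masked self-attention $f^m$ with parameters $(A,V)$ is Lipschitz continuous on $B_R^n$ and $$\mathrm{Lip}\big(f^m_{|B_R^n}\big)\le\sqrt3\,\|V\|_2\big(\|A\|_2^2R^4(n+1)+n\big)^{1/2}.$$
   Context: Masked self-attention: for $X=(x_1,\dots,x_n)\in(\mathbb R^d)^n$, $f^m(X)_i=V\sum_{j=1}^iP_{ij}x_j$, $1\le i\le n$, with $P_{ij}=\exp(x_i^\top A^\top x_j)/\sum_{l=1}^i\exp(x_i^\top A^\top x_l)$ for $j\le i$. $B_R\subset\mathbb R^d$ is the closed ball of center 0, radius $R$. $\mathrm{Lip}(f^m_{|\mathcal X})=\sup_{X\ne Y\in\mathcal X}\|f^m(X)-f^m(Y)\|_F/\|X-Y\|_F$ with Frobenius norm $\|X\|_F=(\sum_i|x_i|^2)^{1/2}$; $\|\cdot\|_2$ is the spectral norm. *)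

theory Defs
  imports "HOL-Analysis.Analysis"
begin

text \<open>Sequences X = (x_1,...,x_n) are functions nat => real^'d; position i (1-based in the
paper) is index i-1 here, only indices below n are relevant.\<close>

definition attn_P :: "real^'d^'d \<Rightarrow> (nat \<Rightarrow> real^'d) \<Rightarrow> nat \<Rightarrow> nat \<Rightarrow> real" where
  "attn_P A X i j =
     exp (X i \<bullet> (transpose A *v X j)) / (\<Sum>l\<le>i. exp (X i \<bullet> (transpose A *v X l)))"

definition masked_attn :: "real^'d^'d \<Rightarrow> real^'d^'k \<Rightarrow> (nat \<Rightarrow> real^'d) \<Rightarrow> nat \<Rightarrow> real^'k" where
  "masked_attn A V X i = V *v (\<Sum>j\<le>i. attn_P A X i j *\<^sub>R X j)"

definition frob :: "nat \<Rightarrow> (nat \<Rightarrow> 'a::real_normed_vector) \<Rightarrow> real" where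
  "frob n X = sqrt (\<Sum>i<n. (norm (X i))\<^sup>2)"

definition spec_norm :: "real^'n^'m \<Rightarrow> real" where
  "spec_norm M = onorm (\<lambda>x. M *v x)"

end

theory Submission
  imports Defs
begin

text \<open>
  Put D = f(X) - f(Y), H = X - Y and Z_t = Y + t H. The function
  \<psi>(t) = \<Sum>_i \<langle>D_i, f(Z_t)_i\<rangle> satisfies \<psi>(1) - \<psi>(0) = |D|_F^2, which by the mean value theorem
  equals \<psi>'(\<xi>). Row i of f is V applied to a softmax average of the Z_t j, j \<le> i; the derivative
  of such an average is the average of the derivatives plus the covariance between the score
  derivatives and the averaged vectors. Since Z_t stays in the ball of radius R, the covariance is
  controlled by the spread of points of that ball around their mean, which gives
  |\<langle>D_i, f(Z_t)_i\<rangle>'| \<le> |D_i| |V|_2 (q_i + |A|_2 R^2 |H_i| + |A|_2 R^2 q_i) with q_i \<le> |H|_F.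
  Cauchy-Schwarz and (x + y + z)^2 \<le> 3 (x^2 + y^2 + z^2) then give
  |D|_F^2 \<le> |D|_F \<cdot> sqrt 3 |V|_2 sqrt(|A|_2^2 R^4 (n + 1) + n) |H|_F.
\<close>

lemma weighted_Cauchy_Schwarz:
  fixes p x y :: "'i \<Rightarrow> real"
  assumes "\<And>j. j \<in> I \<Longrightarrow> p j \<ge> 0"
  shows "\<bar>\<Sum>j\<in>I. p j * x j * y j\<bar> \<le> sqrt (\<Sum>j\<in>I. p j * (x j)\<^sup>2) * sqrt (\<Sum>j\<in>I. p j * (y j)\<^sup>2)"
proof -
  have "(\<Sum>j\<in>I. (sqrt (p j) * x j) * (sqrt (p j) * y j))\<^sup>2
      \<le> (\<Sum>j\<in>I. (sqrt (p j) * x j)\<^sup>2) * (\<Sum>j\<in>I. (sqrt (p j) * y j)\<^sup>2)"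
    by (rule Cauchy_Schwarz_ineq_sum)
  also have "(\<Sum>j\<in>I. (sqrt (p j) * x j) * (sqrt (p j) * y j)) = (\<Sum>j\<in>I. p j * x j * y j)"
    using assms by (intro sum.cong) (auto simp: algebra_simps)
  also have "(\<Sum>j\<in>I. (sqrt (p j) * x j)\<^sup>2) = (\<Sum>j\<in>I. p j * (x j)\<^sup>2)"
    using assms by (intro sum.cong) (auto simp: power_mult_distrib)
  also have "(\<Sum>j\<in>I. (sqrt (p j) * y j)\<^sup>2) = (\<Sum>j\<in>I. p j * (y j)\<^sup>2)"
    using assms by (intro sum.cong) (auto simp: power_mult_distrib)
  finally show ?thesis
    by (metis real_sqrt_abs real_sqrt_le_mono real_sqrt_mult)
qed

lemma weighted_rms_mono:
  fixes p c b :: "'i \<Rightarrow> real"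
  assumes "\<And>j. j \<in> I \<Longrightarrow> p j \<ge> 0" and "\<And>j. j \<in> I \<Longrightarrow> \<bar>c j\<bar> \<le> \<kappa> * b j" and "\<kappa> \<ge> 0"
  shows "sqrt (\<Sum>j\<in>I. p j * (c j)\<^sup>2) \<le> \<kappa> * sqrt (\<Sum>j\<in>I. p j * (b j)\<^sup>2)"
proof -
  have "(c j)\<^sup>2 \<le> (\<kappa> * b j)\<^sup>2" if "j \<in> I" for j
    using assms(2)[OF that] by (metis abs_ge_zero order_trans power2_abs power_mono)
  then have "(\<Sum>j\<in>I. p j * (c j)\<^sup>2) \<le> (\<Sum>j\<in>I. p j * (\<kappa> * b j)\<^sup>2)"
    using assms(1) by (intro sum_mono mult_left_mono) auto
  also have "\<dots> = \<kappa>\<^sup>2 * (\<Sum>j\<in>I. p j * (b j)\<^sup>2)"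
    by (simp add: sum_distrib_left power_mult_distrib algebra_simps)
  finally show ?thesis
    using assms(3) by (metis real_sqrt_le_mono real_sqrt_mult real_sqrt_abs abs_of_nonneg)
qed

lemma weighted_variance_eq:
  fixes z :: "'i \<Rightarrow> 'v::real_inner"
  assumes "sum p I = 1"
  shows "(\<Sum>j\<in>I. p j * (norm (z j - (\<Sum>l\<in>I. p l *\<^sub>R z l)))\<^sup>2)
        = (\<Sum>j\<in>I. p j * (norm (z j))\<^sup>2) - (norm (\<Sum>l\<in>I. p l *\<^sub>R z l))\<^sup>2"
proof -
  define m where "m = (\<Sum>l\<in>I. p l *\<^sub>R z l)"
  have "(\<Sum>j\<in>I. p j * (norm (z j - m))\<^sup>2)
      = (\<Sum>j\<in>I. p j * (norm (z j))\<^sup>2 - 2 * ((p j *\<^sub>R z j) \<bullet> m) + p j * (m \<bullet> m))"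
    by (intro sum.cong) (auto simp: power2_norm_eq_inner algebra_simps inner_commute)
  also have "\<dots> = (\<Sum>j\<in>I. p j * (norm (z j))\<^sup>2) - 2 * (m \<bullet> m) + m \<bullet> m"
    by (simp add: sum.distrib sum_subtractf inner_sum_left m_def assms sum_distrib_left[symmetric] sum_distrib_right[symmetric])
  finally show ?thesis by (simp add: m_def power2_norm_eq_inner)
qed

lemma weighted_deviation_le:
  fixes z :: "'i \<Rightarrow> 'v::real_inner"
  assumes "\<And>j. j \<in> I \<Longrightarrow> p j \<ge> 0" and "sum p I = 1" and "\<And>j. j \<in> I \<Longrightarrow> norm (z j) \<le> R"
  shows "sqrt (\<Sum>j\<in>I. p j * (norm (z j - (\<Sum>l\<in>I. p l *\<^sub>R z l)))\<^sup>2) \<le> R"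
proof -
  obtain i where "i \<in> I" using assms(2) by fastforce
  then have "R \<ge> 0" using assms(3) norm_ge_zero order_trans by blast
  have "(\<Sum>j\<in>I. p j * (norm (z j - (\<Sum>l\<in>I. p l *\<^sub>R z l)))\<^sup>2) \<le> (\<Sum>j\<in>I. p j * (norm (z j))\<^sup>2)"
    unfolding weighted_variance_eq[OF assms(2)] by simp
  also have "\<dots> \<le> (\<Sum>j\<in>I. p j * R\<^sup>2)"
    using assms(1,3) by (intro sum_mono mult_left_mono power_mono) auto
  also have "\<dots> = R\<^sup>2"
    by (simp add: sum_distrib_right[symmetric] assms(2))
  finally show ?thesis
    using \<open>R \<ge> 0\<close> by (simp add: real_le_lsqrt)
qed

lemma abs_weighted_mean_le:
  fixes p x :: "'i \<Rightarrow> real"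
  assumes "\<And>j. j \<in> I \<Longrightarrow> p j \<ge> 0" and "sum p I = 1"
  shows "\<bar>\<Sum>j\<in>I. p j * x j\<bar> \<le> sqrt (\<Sum>j\<in>I. p j * (x j)\<^sup>2)"
  using weighted_Cauchy_Schwarz[of I p x "\<lambda>_. 1", OF assms(1)] assms(2) by simp

lemma abs_weighted_sum_centered_le:
  fixes z :: "'i \<Rightarrow> 'v::real_inner" and L :: "'v \<Rightarrow> real"
  assumes "\<And>j. j \<in> I \<Longrightarrow> p j \<ge> 0" and "sum p I = 1" and "\<And>j. j \<in> I \<Longrightarrow> norm (z j) \<le> R"
    and "\<And>v. \<bar>L v\<bar> \<le> C * norm v" and "C \<ge> 0" and c_le: "sqrt (\<Sum>j\<in>I. p j * (c j)\<^sup>2) \<le> \<kappa>"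
  shows "\<bar>\<Sum>j\<in>I. p j * c j * L (z j - (\<Sum>l\<in>I. p l *\<^sub>R z l))\<bar> \<le> C * R * \<kappa>"
proof -
  define y where "y j = z j - (\<Sum>l\<in>I. p l *\<^sub>R z l)" for j
  have "sqrt (\<Sum>j\<in>I. p j * (norm (y j))\<^sup>2) \<le> R"
    unfolding y_def using assms(1-3) by (rule weighted_deviation_le)
  moreover have "sqrt (\<Sum>j\<in>I. p j * (L (y j))\<^sup>2) \<le> C * sqrt (\<Sum>j\<in>I. p j * (norm (y j))\<^sup>2)"
    using assms(1,4,5) by (rule weighted_rms_mono)
  ultimately have L_le: "sqrt (\<Sum>j\<in>I. p j * (L (y j))\<^sup>2) \<le> C * R"
    using assms(5) by (meson mult_left_mono order_trans)
  have "\<bar>\<Sum>j\<in>I. p j * c j * L (y j)\<bar> \<le> sqrt (\<Sum>j\<in>I. p j * (c j)\<^sup>2) * sqrt (\<Sum>j\<in>I. p j * (L (y j))\<^sup>2)"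
    using assms(1) by (rule weighted_Cauchy_Schwarz)
  also have "\<dots> \<le> \<kappa> * (C * R)"
  proof (rule mult_mono[OF c_le L_le])
    have "0 \<le> sqrt (\<Sum>j\<in>I. p j * (c j)\<^sup>2)" using assms(1) by (simp add: sum_nonneg)
    then show "0 \<le> \<kappa>" using c_le by linarith
  qed (use assms(1) in \<open>simp add: sum_nonneg\<close>)
  finally show ?thesis by (simp add: y_def mult.commute)
qed

definition softmax :: "('i \<Rightarrow> real) \<Rightarrow> 'i set \<Rightarrow> 'i \<Rightarrow> real" where
  "softmax s I j = exp (s j) / (\<Sum>l\<in>I. exp (s l))"

lemma softmax_nonneg: "softmax s I j \<ge> 0"
  unfolding softmax_def by (intro divide_nonneg_nonneg sum_nonneg) auto

lemma sum_softmax: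
  assumes "finite I" and "I \<noteq> {}"
  shows "(\<Sum>j\<in>I. softmax s I j) = 1"
proof -
  have "(\<Sum>l\<in>I. exp (s l)) > 0" using assms by (intro sum_pos) auto
  then show ?thesis by (simp add: softmax_def sum_divide_distrib[symmetric])
qed

lemma softmax_le_1:
  assumes "finite I" and "j \<in> I"
  shows "softmax s I j \<le> 1"
proof -
  have "exp (s j) \<le> (\<Sum>l\<in>I. exp (s l))" using assms by (intro member_le_sum) auto
  moreover have "(\<Sum>l\<in>I. exp (s l)) > 0" using assms by (intro sum_pos) auto
  ultimately show ?thesis by (simp add: softmax_def)
qed

lemma attn_P_eq_softmax: "attn_P A X i = softmax (\<lambda>j. X i \<bullet> (transpose A *v X j)) {..i}"
  by (simp add: fun_eq_iff attn_P_def softmax_def)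

lemma has_real_derivative_softmax_mean:
  assumes "finite I" and "I \<noteq> {}"
    and s: "\<And>j. j \<in> I \<Longrightarrow> ((\<lambda>t. s t j) has_real_derivative s' j) (at t)"
    and u: "\<And>j. j \<in> I \<Longrightarrow> ((\<lambda>t. u t j) has_real_derivative u' j) (at t)"
  shows "((\<lambda>t. \<Sum>j\<in>I. softmax (s t) I j * u t j) has_real_derivative
     (\<Sum>j\<in>I. softmax (s t) I j * u' j) + (\<Sum>j\<in>I. softmax (s t) I j * s' j * u t j)
     - (\<Sum>j\<in>I. softmax (s t) I j * u t j) * (\<Sum>j\<in>I. softmax (s t) I j * s' j)) (at t)"
proof -
  define S where "S t = (\<Sum>l\<in>I. exp (s t l))" for t
  have S_pos: "S t > 0" unfolding S_def using assms(1,2) by (intro sum_pos) auto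
  have mean_eq: "(\<Sum>j\<in>I. softmax (s t) I j * u t j) = (\<Sum>j\<in>I. exp (s t j) * u t j) / S t" for t
    by (simp add: softmax_def S_def sum_divide_distrib)
  have dN: "((\<lambda>t. \<Sum>j\<in>I. exp (s t j) * u t j) has_real_derivative
      (\<Sum>j\<in>I. exp (s t j) * s' j * u t j + exp (s t j) * u' j)) (at t)"
    by (rule DERIV_sum) (auto intro!: derivative_eq_intros s u simp: algebra_simps)
  have dS: "(S has_real_derivative (\<Sum>j\<in>I. exp (s t j) * s' j)) (at t)"
    unfolding S_def by (rule DERIV_sum) (auto intro!: derivative_eq_intros s simp: algebra_simps)
  have "((\<lambda>t. (\<Sum>j\<in>I. exp (s t j) * u t j) / S t) has_real_derivative
      ((\<Sum>j\<in>I. exp (s t j) * s' j * u t j + exp (s t j) * u' j) * S t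
       - (\<Sum>j\<in>I. exp (s t j) * u t j) * (\<Sum>j\<in>I. exp (s t j) * s' j)) / (S t)\<^sup>2) (at t)"
    using DERIV_quotient[OF dN dS] S_pos by (simp add: power2_eq_square mult.commute)
  moreover have "((\<Sum>j\<in>I. exp (s t j) * s' j * u t j + exp (s t j) * u' j) * S t
       - (\<Sum>j\<in>I. exp (s t j) * u t j) * (\<Sum>j\<in>I. exp (s t j) * s' j)) / (S t)\<^sup>2
     = (\<Sum>j\<in>I. softmax (s t) I j * u' j) + (\<Sum>j\<in>I. softmax (s t) I j * s' j * u t j)
       - (\<Sum>j\<in>I. softmax (s t) I j * u t j) * (\<Sum>j\<in>I. softmax (s t) I j * s' j)"
    using S_pos unfolding softmax_def S_def[symmetric]
    by (simp add: sum_divide_distrib[symmetric] sum.distrib field_simps power2_eq_square)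
  ultimately show ?thesis
    unfolding mean_eq by simp
qed

lemma has_real_derivative_bilinear_segment:
  assumes "bilinear b"
  shows "((\<lambda>t. b (x + t *\<^sub>R h) (y + t *\<^sub>R k) :: real) has_real_derivative
          b h (y + t *\<^sub>R k) + b (x + t *\<^sub>R h) k) (at t)"
proof -
  have expand: "b (x + t *\<^sub>R h) (y + t *\<^sub>R k) = b x y + t * (b h y + b x k) + t\<^sup>2 * b h k" for t
    using assms by (simp add: bilinear_ladd bilinear_radd bilinear_lmul bilinear_rmul
        algebra_simps power2_eq_square)
  have "((\<lambda>t. b x y + t * (b h y + b x k) + t\<^sup>2 * b h k) has_real_derivative
      (b h y + b x k) + 2 * t * b h k) (at t)"
    by (auto intro!: derivative_eq_intros)
  moreover have "(b h y + b x k) + 2 * t * b h k = b h (y + t *\<^sub>R k) + b (x + t *\<^sub>R h) k"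
    using assms by (simp add: bilinear_ladd bilinear_radd bilinear_lmul bilinear_rmul algebra_simps)
  ultimately show ?thesis unfolding expand by simp
qed

text \<open>The expression bounded here is the derivative from has_real_derivative_softmax_mean for the
  scores b (z i) (z j) moved in direction h.\<close>

lemma attention_row_derivative_le:
  fixes z h :: "'i \<Rightarrow> 'v::real_inner" and L :: "'v \<Rightarrow> real" and b :: "'v \<Rightarrow> 'v \<Rightarrow> real"
  assumes "i \<in> I" and p_nonneg: "\<And>j. j \<in> I \<Longrightarrow> p j \<ge> 0" and p_sum: "sum p I = 1"
    and z_le: "\<And>j. j \<in> I \<Longrightarrow> norm (z j) \<le> R"
    and "linear L" and L_le: "\<And>v. \<bar>L v\<bar> \<le> C * norm v" and "C \<ge> 0"
    and b_le: "\<And>u w. \<bar>b u w\<bar> \<le> a * norm u * norm w" and "a \<ge> 0"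
    and h_le: "sqrt (\<Sum>j\<in>I. p j * (norm (h j))\<^sup>2) \<le> q"
  shows "\<bar>(\<Sum>j\<in>I. p j * L (h j))
           + (\<Sum>j\<in>I. p j * (b (h i) (z j) + b (z i) (h j)) * L (z j))
           - (\<Sum>j\<in>I. p j * L (z j)) * (\<Sum>j\<in>I. p j * (b (h i) (z j) + b (z i) (h j)))\<bar>
         \<le> C * (q + a * R\<^sup>2 * norm (h i) + a * R\<^sup>2 * q)"
proof -
  define m where "m = (\<Sum>l\<in>I. p l *\<^sub>R z l)"
  have "R \<ge> 0" using assms(1) z_le norm_ge_zero order_trans by blast
  have L_mean: "L m = (\<Sum>j\<in>I. p j * L (z j))"
    unfolding m_def using \<open>linear L\<close> by (simp add: linear_sum linear_scale)
  \<comment> \<open>Centring the z j, whose weighted spread is at most R, saves a factor 2.\<close>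
  have covariance: "(\<Sum>j\<in>I. p j * c j * L (z j)) - (\<Sum>j\<in>I. p j * L (z j)) * (\<Sum>j\<in>I. p j * c j)
      = (\<Sum>j\<in>I. p j * c j * L (z j - m))" for c
    unfolding linear_diff[OF \<open>linear L\<close>] L_mean[symmetric]
    by (simp add: right_diff_distrib sum_subtractf sum_distrib_left sum_distrib_right mult.commute)
  have rms_le: "sqrt (\<Sum>j\<in>I. p j * (c j)\<^sup>2) \<le> \<kappa> * sqrt (\<Sum>j\<in>I. p j * (e j)\<^sup>2)"
    if "\<And>j. j \<in> I \<Longrightarrow> \<bar>c j\<bar> \<le> \<kappa> * e j" "\<kappa> \<ge> 0" for c e \<kappa>
    using p_nonneg that by (rule weighted_rms_mono)
  have centered_le: "\<bar>\<Sum>j\<in>I. p j * c j * L (z j - m)\<bar> \<le> C * R * \<kappa>"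
    if "sqrt (\<Sum>j\<in>I. p j * (c j)\<^sup>2) \<le> \<kappa>" for c \<kappa>
    unfolding m_def using p_nonneg p_sum z_le L_le \<open>C \<ge> 0\<close> that by (rule abs_weighted_sum_centered_le)
  have "\<bar>\<Sum>j\<in>I. p j * L (h j)\<bar> \<le> C * q"
    using abs_weighted_mean_le[OF p_nonneg p_sum, of "\<lambda>j. L (h j)"] rms_le[of "\<lambda>j. L (h j)" C "\<lambda>j. norm (h j)"]
      h_le L_le \<open>C \<ge> 0\<close> by (smt (verit) mult_left_mono)
  moreover have "\<bar>\<Sum>j\<in>I. p j * b (h i) (z j) * L (z j - m)\<bar> \<le> C * R * (a * norm (h i) * R)"
  proof (rule centered_le)
    have "\<bar>b (h i) (z j)\<bar> \<le> a * norm (h i) * R * 1" if "j \<in> I" for j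
      using b_le[of "h i" "z j"] mult_left_mono[OF z_le[OF that], of "a * norm (h i)"] \<open>a \<ge> 0\<close> by simp
    then show "sqrt (\<Sum>j\<in>I. p j * (b (h i) (z j))\<^sup>2) \<le> a * norm (h i) * R"
      using rms_le[of _ "a * norm (h i) * R" "\<lambda>_. 1"] \<open>a \<ge> 0\<close> \<open>R \<ge> 0\<close> p_sum by simp
  qed
  moreover have "\<bar>\<Sum>j\<in>I. p j * b (z i) (h j) * L (z j - m)\<bar> \<le> C * R * (a * R * q)"
  proof (rule centered_le)
    have "\<bar>b (z i) (h j)\<bar> \<le> a * R * norm (h j)" for j
      using b_le[of "z i" "h j"] mult_right_mono[OF mult_left_mono[OF z_le[OF assms(1)] \<open>a \<ge> 0\<close>], of "norm (h j)"]
      by simp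
    then show "sqrt (\<Sum>j\<in>I. p j * (b (z i) (h j))\<^sup>2) \<le> a * R * q"
      using rms_le[of "\<lambda>j. b (z i) (h j)" "a * R" "\<lambda>j. norm (h j)"] h_le \<open>a \<ge> 0\<close> \<open>R \<ge> 0\<close>
      by (smt (verit) mult_left_mono mult_nonneg_nonneg)
  qed
  moreover have "C * q + C * R * (a * norm (h i) * R) + C * R * (a * R * q) = C * (q + a * R\<^sup>2 * norm (h i) + a * R\<^sup>2 * q)"
    by (simp add: power2_eq_square algebra_simps)
  moreover have "(\<Sum>j\<in>I. p j * (b (h i) (z j) + b (z i) (h j)) * L (z j - m))
      = (\<Sum>j\<in>I. p j * b (h i) (z j) * L (z j - m)) + (\<Sum>j\<in>I. p j * b (z i) (h j) * L (z j - m))"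
    by (simp add: sum.distrib algebra_simps)
  ultimately show ?thesis
    using covariance[of "\<lambda>j. b (h i) (z j) + b (z i) (h j)"] by argo
qed

lemma norm_segment_le:
  fixes x y :: "'a::real_normed_vector"
  assumes "norm x \<le> R" and "norm y \<le> R" and "0 \<le> t" and "t \<le> 1"
  shows "norm (y + t *\<^sub>R (x - y)) \<le> R"
proof -
  have "y + t *\<^sub>R (x - y) = (1 - t) *\<^sub>R y + t *\<^sub>R x" by (simp add: algebra_simps)
  also have "norm \<dots> \<le> (1 - t) * norm y + t * norm x"
    using assms(3,4) norm_triangle_ineq[of "(1 - t) *\<^sub>R y" "t *\<^sub>R x"] by simp
  also have "\<dots> \<le> (1 - t) * R + t * R"
    using assms by (intro add_mono mult_left_mono) auto
  finally show ?thesis by (simp add: algebra_simps)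
qed

lemma spec_norm_nonneg: "spec_norm M \<ge> 0"
  unfolding spec_norm_def by (rule onorm_pos_le) simp

lemma norm_matrix_vector_mult_le: "norm (M *v x) \<le> spec_norm M * norm x"
  unfolding spec_norm_def by (rule onorm) simp

lemma linear_inner_matrix_vector_mult:
  fixes M :: "real^'n^'m"
  shows "linear (\<lambda>v. d \<bullet> (M *v v))"
  by (intro linearI) (simp_all add: matrix_vector_right_distrib matrix_vector_mult_scaleR inner_add_right)

lemma bilinear_inner_matrix_vector_mult:
  fixes M :: "real^'n^'n"
  shows "bilinear (\<lambda>u w. u \<bullet> (M *v w))"
  unfolding bilinear_def
  by (auto intro!: linearI simp: matrix_vector_right_distrib matrix_vector_mult_scaleR inner_add_left inner_add_right)

lemma abs_inner_transpose_mult_le: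
  fixes M :: "real^'n^'n"
  shows "\<bar>u \<bullet> (transpose M *v w)\<bar> \<le> spec_norm M * norm u * norm w"
proof -
  have "u \<bullet> (transpose M *v w) = (M *v u) \<bullet> w"
    by (metis dot_lmul_matrix vector_transpose_matrix)
  then have "\<bar>u \<bullet> (transpose M *v w)\<bar> \<le> norm (M *v u) * norm w"
    by (simp add: Cauchy_Schwarz_ineq2)
  also have "\<dots> \<le> spec_norm M * norm u * norm w"
    by (intro mult_right_mono norm_matrix_vector_mult_le) simp
  finally show ?thesis .
qed

lemma inner_masked_attn_eq_softmax_mean:
  "d \<bullet> masked_attn A V X i
     = (\<Sum>j\<le>i. softmax (\<lambda>j. X i \<bullet> (transpose A *v X j)) {..i} j * (d \<bullet> (V *v X j)))"
  using linear_inner_matrix_vector_mult[of d V]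
  by (simp add: masked_attn_def attn_P_eq_softmax linear_sum linear_scale o_def inner_sum_right)

lemma inner_masked_attn_segment_derivative:
  fixes A :: "real^'d^'d" and V :: "real^'d^'k" and X H :: "nat \<Rightarrow> real^'d" and d :: "real^'k"
  assumes "\<And>j. j \<le> i \<Longrightarrow> norm (X j + t *\<^sub>R H j) \<le> R"
  shows "\<exists>D'. ((\<lambda>t. d \<bullet> masked_attn A V (\<lambda>j. X j + t *\<^sub>R H j) i) has_real_derivative D') (at t)
    \<and> \<bar>D'\<bar> \<le> norm d * spec_norm V * (sqrt (\<Sum>j\<le>i. (norm (H j))\<^sup>2)
         + spec_norm A * R\<^sup>2 * norm (H i) + spec_norm A * R\<^sup>2 * sqrt (\<Sum>j\<le>i. (norm (H j))\<^sup>2))"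
proof -
  define Z where "Z t j = X j + t *\<^sub>R H j" for t j
  define b where "b u w = u \<bullet> (transpose A *v w)" for u w
  define L where "L v = d \<bullet> (V *v v)" for v
  define p where "p = softmax (\<lambda>j. b (Z t i) (Z t j)) {..i}"
  define s' where "s' j = b (H i) (Z t j) + b (Z t i) (H j)" for j
  define D' where "D' = (\<Sum>j\<le>i. p j * L (H j)) + (\<Sum>j\<le>i. p j * s' j * L (Z t j))
      - (\<Sum>j\<le>i. p j * L (Z t j)) * (\<Sum>j\<le>i. p j * s' j)"
  have "bilinear b" unfolding b_def by (rule bilinear_inner_matrix_vector_mult)
  have "linear L" unfolding L_def by (rule linear_inner_matrix_vector_mult)
  have b_le: "\<bar>b u w\<bar> \<le> spec_norm A * norm u * norm w" for u w
    unfolding b_def by (rule abs_inner_transpose_mult_le)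
  have "((\<lambda>t. \<Sum>j\<le>i. softmax (\<lambda>j. b (Z t i) (Z t j)) {..i} j * L (Z t j)) has_real_derivative D') (at t)"
    unfolding D'_def p_def
  proof (rule has_real_derivative_softmax_mean)
    show "((\<lambda>t. b (Z t i) (Z t j)) has_real_derivative s' j) (at t)" for j
      unfolding Z_def s'_def by (rule has_real_derivative_bilinear_segment[OF \<open>bilinear b\<close>])
    have "L (Z t j) = L (X j) + t * L (H j)" for t j
      unfolding Z_def using \<open>linear L\<close> by (simp add: linear_add linear_scale)
    then show "((\<lambda>t. L (Z t j)) has_real_derivative L (H j)) (at t)" for j
      by (auto intro!: derivative_eq_intros)
  qed auto
  then have deriv: "((\<lambda>t. d \<bullet> masked_attn A V (\<lambda>j. X j + t *\<^sub>R H j) i) has_real_derivative D') (at t)"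
    by (simp add: inner_masked_attn_eq_softmax_mean Z_def b_def L_def)
  have "\<bar>D'\<bar> \<le> norm d * spec_norm V * (sqrt (\<Sum>j\<le>i. (norm (H j))\<^sup>2)
         + spec_norm A * R\<^sup>2 * norm (H i) + spec_norm A * R\<^sup>2 * sqrt (\<Sum>j\<le>i. (norm (H j))\<^sup>2))"
    unfolding D'_def s'_def
  proof (rule attention_row_derivative_le)
    show "\<bar>L v\<bar> \<le> norm d * spec_norm V * norm v" for v
      unfolding L_def using Cauchy_Schwarz_ineq2[of d "V *v v"] norm_matrix_vector_mult_le[of V v]
      by (metis mult.assoc mult_left_mono norm_ge_zero order_trans)
    show "sqrt (\<Sum>j\<le>i. p j * (norm (H j))\<^sup>2) \<le> sqrt (\<Sum>j\<le>i. (norm (H j))\<^sup>2)"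
      unfolding p_def
      by (intro real_sqrt_le_mono sum_mono mult_left_le_one_le) (auto simp: softmax_le_1 softmax_nonneg)
  qed (use assms \<open>linear L\<close> b_le in \<open>auto simp: p_def sum_softmax softmax_nonneg Z_def spec_norm_nonneg\<close>)
  with deriv show ?thesis by blast
qed

lemma frob_masked_attn_diff_sq_le:
  fixes A :: "real^'d^'d" and V :: "real^'d^'k" and X Y :: "nat \<Rightarrow> real^'d"
  assumes X_le: "\<And>i. i < n \<Longrightarrow> norm (X i) \<le> R" and Y_le: "\<And>i. i < n \<Longrightarrow> norm (Y i) \<le> R"
  shows "(frob n (\<lambda>i. masked_attn A V X i - masked_attn A V Y i))\<^sup>2
    \<le> spec_norm V * (\<Sum>i<n. norm (masked_attn A V X i - masked_attn A V Y i)
         * (sqrt (\<Sum>j\<le>i. (norm (X j - Y j))\<^sup>2) + spec_norm A * R\<^sup>2 * norm (X i - Y i)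
            + spec_norm A * R\<^sup>2 * sqrt (\<Sum>j\<le>i. (norm (X j - Y j))\<^sup>2)))"
proof -
  define f where "f = masked_attn A V"
  define D where "D i = f X i - f Y i" for i
  define Z where "Z t j = Y j + t *\<^sub>R (X j - Y j)" for t j
  define m where "m i = sqrt (\<Sum>j\<le>i. (norm (X j - Y j))\<^sup>2) + spec_norm A * R\<^sup>2 * norm (X i - Y i)
      + spec_norm A * R\<^sup>2 * sqrt (\<Sum>j\<le>i. (norm (X j - Y j))\<^sup>2)" for i
  define \<psi> where "\<psi> t = (\<Sum>i<n. D i \<bullet> f (Z t) i)" for t
  define g where "g t i = (SOME D'. ((\<lambda>t. D i \<bullet> f (Z t) i) has_real_derivative D') (at t)
      \<and> \<bar>D'\<bar> \<le> norm (D i) * spec_norm V * m i)" for t i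
  have g: "((\<lambda>t. D i \<bullet> f (Z t) i) has_real_derivative g t i) (at t)
      \<and> \<bar>g t i\<bar> \<le> norm (D i) * spec_norm V * m i" if "0 \<le> t" "t \<le> 1" "i < n" for t i
    unfolding g_def
  proof (rule someI_ex)
    have "norm (Z t j) \<le> R" if "j \<le> i" for j
      unfolding Z_def using that \<open>i < n\<close> \<open>0 \<le> t\<close> \<open>t \<le> 1\<close>
      by (intro norm_segment_le X_le Y_le) auto
    then show "\<exists>D'. ((\<lambda>t. D i \<bullet> f (Z t) i) has_real_derivative D') (at t)
        \<and> \<bar>D'\<bar> \<le> norm (D i) * spec_norm V * m i"
      unfolding Z_def f_def m_def by (rule inner_masked_attn_segment_derivative)
  qed
  have "(\<psi> has_real_derivative (\<Sum>i<n. g t i)) (at t)" if "0 \<le> t" "t \<le> 1" for t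
    unfolding \<psi>_def using g that by (auto intro!: DERIV_sum)
  then obtain \<xi> where "0 < \<xi>" "\<xi> < 1" and mvt: "\<psi> 1 - \<psi> 0 = (\<Sum>i<n. g \<xi> i)"
    using MVT2[of 0 1 \<psi> "\<lambda>t. \<Sum>i<n. g t i"] by auto
  have "Z 1 = X" "Z 0 = Y" by (simp_all add: Z_def fun_eq_iff)
  then have "\<psi> 1 - \<psi> 0 = (\<Sum>i<n. (norm (D i))\<^sup>2)"
    by (simp add: \<psi>_def sum_subtractf[symmetric] power2_norm_eq_inner inner_diff_right D_def)
  also have "\<dots> = (frob n D)\<^sup>2"
    unfolding frob_def by (simp add: sum_nonneg)
  finally have "(frob n D)\<^sup>2 = (\<Sum>i<n. g \<xi> i)"
    using mvt by simp
  also have "\<dots> \<le> (\<Sum>i<n. norm (D i) * spec_norm V * m i)"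
  proof (rule sum_mono)
    fix i assume "i \<in> {..<n}"
    then have "\<bar>g \<xi> i\<bar> \<le> norm (D i) * spec_norm V * m i"
      using g \<open>0 < \<xi>\<close> \<open>\<xi> < 1\<close> by simp
    then show "g \<xi> i \<le> norm (D i) * spec_norm V * m i" by linarith
  qed
  also have "\<dots> = spec_norm V * (\<Sum>i<n. norm (D i) * m i)"
    by (simp add: sum_distrib_left mult_ac)
  finally show ?thesis
    unfolding D_def f_def m_def .
qed

lemma sum_mult_three_terms_le:
  fixes d h q :: "nat \<Rightarrow> real"
  assumes "\<And>i. i < n \<Longrightarrow> 0 \<le> q i" and "\<And>i. i < n \<Longrightarrow> q i \<le> sqrt (\<Sum>j<n. (h j)\<^sup>2)" and "c \<ge> 0"
  shows "(\<Sum>i<n. \<bar>d i\<bar> * (q i + c * \<bar>h i\<bar> + c * q i))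
    \<le> sqrt 3 * sqrt (c\<^sup>2 * (real n + 1) + real n) * sqrt (\<Sum>i<n. (d i)\<^sup>2) * sqrt (\<Sum>i<n. (h i)\<^sup>2)"
proof -
  define S where "S = (\<Sum>j<n. (h j)\<^sup>2)"
  define m where "m i = q i + c * \<bar>h i\<bar> + c * q i" for i
  have "S \<ge> 0" unfolding S_def by (simp add: sum_nonneg)
  have q_sq: "(q i)\<^sup>2 \<le> S" if "i < n" for i
    using power_mono[OF assms(2,1)[OF that], of 2] \<open>S \<ge> 0\<close> by (simp add: S_def)
  have three_sq: "(x + y + z)\<^sup>2 \<le> 3 * (x\<^sup>2 + y\<^sup>2 + z\<^sup>2)" for x y z :: real
  proof -
    have "3 * (x\<^sup>2 + y\<^sup>2 + z\<^sup>2) - (x + y + z)\<^sup>2 = (x - y)\<^sup>2 + (y - z)\<^sup>2 + (x - z)\<^sup>2"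
      by (simp add: power2_eq_square algebra_simps)
    then show ?thesis by (smt (verit) zero_le_power2)
  qed
  have "(m i)\<^sup>2 \<le> 3 * (S + c\<^sup>2 * (h i)\<^sup>2 + c\<^sup>2 * S)" if "i < n" for i
  proof -
    have "(m i)\<^sup>2 \<le> 3 * ((q i)\<^sup>2 + c\<^sup>2 * (h i)\<^sup>2 + c\<^sup>2 * (q i)\<^sup>2)"
      using three_sq[of "q i" "c * \<bar>h i\<bar>" "c * q i"] unfolding m_def by (simp add: power_mult_distrib)
    also have "\<dots> \<le> 3 * (S + c\<^sup>2 * (h i)\<^sup>2 + c\<^sup>2 * S)"
      using q_sq[OF that] by (intro mult_left_mono add_mono) auto
    finally show ?thesis .
  qed
  then have "(\<Sum>i<n. (m i)\<^sup>2) \<le> (\<Sum>i<n. 3 * (S + c\<^sup>2 * (h i)\<^sup>2 + c\<^sup>2 * S))"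
    by (intro sum_mono) auto
  also have "\<dots> = 3 * (c\<^sup>2 * (real n + 1) + real n) * S"
    by (simp add: sum.distrib sum_distrib_left[symmetric] S_def algebra_simps)
  finally have "sqrt (\<Sum>i<n. (m i)\<^sup>2) \<le> sqrt 3 * sqrt (c\<^sup>2 * (real n + 1) + real n) * sqrt S"
    by (simp add: real_sqrt_mult[symmetric])
  then have "sqrt (\<Sum>i<n. (d i)\<^sup>2) * sqrt (\<Sum>i<n. (m i)\<^sup>2)
      \<le> sqrt (\<Sum>i<n. (d i)\<^sup>2) * (sqrt 3 * sqrt (c\<^sup>2 * (real n + 1) + real n) * sqrt S)"
    by (rule mult_left_mono) (simp add: sum_nonneg)
  moreover have "(\<Sum>i<n. \<bar>d i\<bar> * m i) \<le> sqrt (\<Sum>i<n. (d i)\<^sup>2) * sqrt (\<Sum>i<n. (m i)\<^sup>2)"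
    using weighted_Cauchy_Schwarz[of "{..<n}" "\<lambda>_. 1" "\<lambda>i. \<bar>d i\<bar>" m] by simp
  ultimately show ?thesis
    unfolding m_def S_def by (simp add: mult_ac)
qed

lemma frob_masked_attn_diff_sq_le_mult:
  fixes A :: "real^'d^'d" and V :: "real^'d^'k" and X Y :: "nat \<Rightarrow> real^'d"
  assumes X_le: "\<And>i. i < n \<Longrightarrow> norm (X i) \<le> R" and Y_le: "\<And>i. i < n \<Longrightarrow> norm (Y i) \<le> R"
  shows "(frob n (\<lambda>i. masked_attn A V X i - masked_attn A V Y i))\<^sup>2
    \<le> frob n (\<lambda>i. masked_attn A V X i - masked_attn A V Y i)
      * (sqrt 3 * spec_norm V * sqrt ((spec_norm A)\<^sup>2 * R ^ 4 * (real n + 1) + real n) * frob n (\<lambda>i. X i - Y i))"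
proof -
  define F where "F = frob n (\<lambda>i. masked_attn A V X i - masked_attn A V Y i)"
  define B where "B = sqrt 3 * sqrt ((spec_norm A)\<^sup>2 * R ^ 4 * (real n + 1) + real n) * frob n (\<lambda>i. X i - Y i)"
  have "F\<^sup>2 \<le> spec_norm V * (\<Sum>i<n. norm (masked_attn A V X i - masked_attn A V Y i)
         * (sqrt (\<Sum>j\<le>i. (norm (X j - Y j))\<^sup>2) + spec_norm A * R\<^sup>2 * norm (X i - Y i)
            + spec_norm A * R\<^sup>2 * sqrt (\<Sum>j\<le>i. (norm (X j - Y j))\<^sup>2)))"
    unfolding F_def using X_le Y_le by (rule frob_masked_attn_diff_sq_le)
  also have "\<dots> \<le> spec_norm V * (B * F)"
  proof (rule mult_left_mono[OF _ spec_norm_nonneg])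
    have "sqrt (\<Sum>j\<le>i. (norm (X j - Y j))\<^sup>2) \<le> sqrt (\<Sum>j<n. (norm (X j - Y j))\<^sup>2)" if "i < n" for i
      using that by (intro real_sqrt_le_mono sum_mono2) auto
    moreover have "(spec_norm A * R\<^sup>2)\<^sup>2 = (spec_norm A)\<^sup>2 * R ^ 4"
      by (simp add: power_mult_distrib power_mult[symmetric])
    moreover have "spec_norm A * R\<^sup>2 \<ge> 0" by (simp add: spec_norm_nonneg)
    ultimately show "(\<Sum>i<n. norm (masked_attn A V X i - masked_attn A V Y i)
         * (sqrt (\<Sum>j\<le>i. (norm (X j - Y j))\<^sup>2) + spec_norm A * R\<^sup>2 * norm (X i - Y i)
            + spec_norm A * R\<^sup>2 * sqrt (\<Sum>j\<le>i. (norm (X j - Y j))\<^sup>2))) \<le> B * F"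
      using sum_mult_three_terms_le[of n "\<lambda>i. sqrt (\<Sum>j\<le>i. (norm (X j - Y j))\<^sup>2)"
          "\<lambda>i. norm (X i - Y i)" "spec_norm A * R\<^sup>2" "\<lambda>i. norm (masked_attn A V X i - masked_attn A V Y i)"]
      unfolding B_def F_def frob_def by (simp add: sum_nonneg mult_ac)
  qed
  finally have "F\<^sup>2 \<le> F * (spec_norm V * B)"
    by (simp add: mult_ac)
  then show ?thesis
    by (simp add: F_def B_def mult_ac)
qed

lemma le_if_square_le_mult:
  fixes x y :: real
  assumes "x\<^sup>2 \<le> x * y" and "0 \<le> y"
  shows "x \<le> y"
proof (cases "x > 0")
  case True
  then show ?thesis using assms(1) by (simp add: power2_eq_square)
next
  case False
  then show ?thesis using assms(2) by simp
qed

theorem mainTheorem10: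
  fixes Q K V :: "real^'d^'k" and R :: real and n :: nat and A :: "real^'d^'d"
  assumes "R > 0"
    and "A = (1 / sqrt (real CARD('k))) *\<^sub>R (transpose K ** Q)"
  shows "\<forall>X Y. (\<forall>i<n. norm (X i) \<le> R) \<and> (\<forall>i<n. norm (Y i) \<le> R) \<longrightarrow>
           frob n (\<lambda>i. masked_attn A V X i - masked_attn A V Y i)
           \<le> sqrt 3 * spec_norm V * sqrt ((spec_norm A)\<^sup>2 * R ^ 4 * (real n + 1) + real n)
             * frob n (\<lambda>i. X i - Y i)"
proof (intro allI impI)
  fix X Y :: "nat \<Rightarrow> real^'d"
  assume "(\<forall>i<n. norm (X i) \<le> R) \<and> (\<forall>i<n. norm (Y i) \<le> R)"
  then have "(frob n (\<lambda>i. masked_attn A V X i - masked_attn A V Y i))\<^sup>2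
    \<le> frob n (\<lambda>i. masked_attn A V X i - masked_attn A V Y i)
      * (sqrt 3 * spec_norm V * sqrt ((spec_norm A)\<^sup>2 * R ^ 4 * (real n + 1) + real n) * frob n (\<lambda>i. X i - Y i))"
    by (intro frob_masked_attn_diff_sq_le_mult) auto
  then show "frob n (\<lambda>i. masked_attn A V X i - masked_attn A V Y i)
      \<le> sqrt 3 * spec_norm V * sqrt ((spec_norm A)\<^sup>2 * R ^ 4 * (real n + 1) + real n) * frob n (\<lambda>i. X i - Y i)"
  proof (rule le_if_square_le_mult)
    have "0 \<le> (spec_norm A)\<^sup>2 * R ^ 4 * (real n + 1) + real n"
      by (intro add_nonneg_nonneg mult_nonneg_nonneg) (simp_all add: zero_le_even_power)
    then show "0 \<le> sqrt 3 * spec_norm V * sqrt ((spec_norm A)\<^sup>2 * R ^ 4 * (real n + 1) + real n)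
        * frob n (\<lambda>i. X i - Y i)"
      by (intro mult_nonneg_nonneg) (simp_all add: frob_def spec_norm_nonneg sum_nonneg)
  qed
qed

end
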